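(* Let $n\in\{2,6,10,\dots\}$ and let $p_n$ denote the minimum length of an increasing path of $f_n$ from the origin to a local maximum of $f_n$. Then $p_2=2$ and $p_{n+4}\ge 2p_n$ for all $n\in\{2,6,10,\dots\}$.
   Context: For $n\in\{2,6,10,\dots\}$ define polynomials $f_n$ in variables $x_1,\dots,x_n$ (evaluated on $\{0,1\}^n$) recursively. Set $f_2(x_1,x_2):=x_1+x_2$. For $n\in\{2,6,10,\dots\}$, write $\mathbf{x}=(x_1,\dots,x_n)$, $S:=\sum_{i=1}^n x_i$, let $M_n:=\max_{\{0,1\}^n} f_n-\min_{\{0,1\}^n} f_n+1$, and define $f_{n+4}(\mathbf{x},x_{n+1},x_{n+2},x_{n+3},x_{n+4}) := f_n(\mathbf{x}) - M_n n^2 x_{n+1} + M_n(n+1) S x_{n+1} - x_{n+2} - 2M_n n S x_{n+2} + 2M_n n(n+2) x_{n+1}x_{n+2} - 4 S x_{n+3} + 2x_{n+1}x_{n+3} + 2x_{n+2}x_{n+3} - 3x_{n+3} + (M_n(n-1)+4) S x_{n+4} + 6M_n n^2 x_{n+3}x_{n+4} - 5M_n n^2 x_{n+4}$. For a function $f:\{0,1\}^m\to\mathbb{R}$, an increasing path is a sequence of vertices $v_0,\dots,v_k$ of $\{0,1\}^m$ such that consecutive vertices differ in exactly one coordinate and $f(v_{j+1})>f(v_j)$ for all $j$; its length is $k$. A local maximum is a vertex no neighbor of which has strictly larger value. *)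

theory Defs
  imports Main
begin

text \<open>Vertices of the cube {0,1}^m, coordinates indexed 0..m-1 (paper's x_1..x_m),
  represented extensionally (zero outside {0..<m}).\<close>
definition cube :: "nat \<Rightarrow> (nat \<Rightarrow> int) set" where
  "cube m = {x. (\<forall>i<m. x i \<in> {0,1}) \<and> (\<forall>i\<ge>m. x i = 0)}"

text \<open>fk k is f_n for n = 4k+2. Coordinates x_{n+1},...,x_{n+4} are x n,...,x (n+3).\<close>
primrec fk :: "nat \<Rightarrow> (nat \<Rightarrow> int) \<Rightarrow> int" where
  "fk 0 = (\<lambda>x. x 0 + x 1)"
| "fk (Suc k) =
    (let g = fk k; n = 4*k+2; N = int n;
         M = Max (g ` cube n) - Min (g ` cube n) + 1
     in (\<lambda>x. let S = (\<Sum>i<n. x i); a = x n; b = x (n+1); c = x (n+2); d = x (n+3) in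
           g x - M * N^2 * a + M * (N+1) * S * a - b - 2 * M * N * S * b
           + 2 * M * N * (N+2) * a * b - 4 * S * c + 2 * a * c + 2 * b * c - 3 * c
           + (M * (N - 1) + 4) * S * d + 6 * M * N^2 * c * d - 5 * M * N^2 * d))"

definition f :: "nat \<Rightarrow> (nat \<Rightarrow> int) \<Rightarrow> int" where
  "f n = fk ((n - 2) div 4)"

definition adj :: "nat \<Rightarrow> (nat \<Rightarrow> int) \<Rightarrow> (nat \<Rightarrow> int) \<Rightarrow> bool" where
  "adj m v w \<longleftrightarrow> v \<in> cube m \<and> w \<in> cube m \<and> card {i. v i \<noteq> w i} = 1"

text \<open>An increasing path given as the nonempty list of its vertices v_0,...,v_k; its length is k.\<close>
definition increasing_path :: "nat \<Rightarrow> ((nat \<Rightarrow> int) \<Rightarrow> int) \<Rightarrow> (nat \<Rightarrow> int) list \<Rightarrow> bool" where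
  "increasing_path m g vs \<longleftrightarrow> vs \<noteq> [] \<and> set vs \<subseteq> cube m \<and>
     (\<forall>j. j + 1 < length vs \<longrightarrow> adj m (vs ! j) (vs ! (j+1)) \<and> g (vs ! j) < g (vs ! (j+1)))"

definition local_max :: "nat \<Rightarrow> ((nat \<Rightarrow> int) \<Rightarrow> int) \<Rightarrow> (nat \<Rightarrow> int) \<Rightarrow> bool" where
  "local_max m g v \<longleftrightarrow> v \<in> cube m \<and> (\<forall>w. adj m v w \<longrightarrow> g w \<le> g v)"

definition p :: "nat \<Rightarrow> nat" where
  "p n = Min {length vs - 1 | vs. increasing_path n (f n) vs \<and> hd vs = (\<lambda>_. 0)
                                   \<and> local_max n (f n) (last vs)}"

end

theory Submission imports Defs begin

text \<open>Write f(n+4) as f(n) of the low coordinates plus an extra term that depends on the low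
  coordinates only through their sum S.  Along an increasing path from the origin the four new
  coordinates are switched on one at a time and in order, the first only when the low part is all
  ones and the third only when it is all zeros.  As M(n) exceeds the oscillation of f(n), a low flip
  that moves S the wrong way never pays: after the first switch the low part stays all ones and
  after the third it stays all zeros.  Before the first and after the fourth switch the extra term
  does not depend on S, so there the low part itself performs an increasing path of f(n).  By
  induction on n the all-ones vertex is the only local maximum reachable from the origin; hence an
  increasing path of f(n+4) from the origin to a local maximum contains two increasing paths of f(n)
  from the origin to a local maximum, one before the first switch and one after the last.\<close>

declare fk.simps(2) [simp del]

section \<open>The cube and increasing paths\<close>

definition flip :: "nat \<Rightarrow> (nat \<Rightarrow> int) \<Rightarrow> nat \<Rightarrow> int" where
  "flip i v = v(i := 1 - v i)"

definition ones :: "nat \<Rightarrow> nat \<Rightarrow> int" where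
  "ones m = (\<lambda>i. if i < m then 1 else 0)"

lemma cube_coord: "v \<in> cube m \<Longrightarrow> v i = 0 \<or> v i = 1"
  by (cases "i < m") (auto simp: cube_def)

lemma cube_coord_outside: "v \<in> cube m \<Longrightarrow> m \<le> i \<Longrightarrow> v i = 0"
  by (simp add: cube_def)

lemma finite_cube: "finite (cube m)"
proof -
  have "cube m \<subseteq> (\<lambda>A i. if i \<in> A then 1 else 0) ` Pow {..<m}"
  proof
    fix x assume x: "x \<in> cube m"
    have "x i = (if i \<in> {i. i < m \<and> x i = 1} then 1 else 0)" for i
      using cube_coord[OF x, of i] cube_coord_outside[OF x, of i] by auto
    then show "x \<in> (\<lambda>A i. if i \<in> A then 1 else 0) ` Pow {..<m}" by blast
  qed
  then show ?thesis by (rule finite_subset) auto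
qed

lemma zero_in_cube: "(\<lambda>_. 0) \<in> cube m"
  by (simp add: cube_def)

lemma ones_in_cube: "ones m \<in> cube m"
  by (simp add: cube_def ones_def)

lemma flip_in_cube: "v \<in> cube m \<Longrightarrow> i < m \<Longrightarrow> flip i v \<in> cube m"
  by (auto simp: cube_def flip_def)

lemma adj_iff_flip: "adj m v w \<longleftrightarrow> v \<in> cube m \<and> (\<exists>i<m. w = flip i v)"
proof
  assume "adj m v w"
  then have cubes: "v \<in> cube m" "w \<in> cube m" and "card {i. v i \<noteq> w i} = 1"
    by (auto simp: adj_def)
  then obtain i where "{j. v j \<noteq> w j} = {i}" by (metis card_1_singletonE)
  then have differ: "v j \<noteq> w j \<longleftrightarrow> j = i" for j by (simp add: set_eq_iff)
  have "i < m"
  proof (rule ccontr)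
    assume "\<not> i < m"
    then have "v i = w i"
      using cube_coord_outside[OF cubes(1), of i] cube_coord_outside[OF cubes(2), of i] by simp
    then show False using differ[of i] by simp
  qed
  moreover have "w = flip i v"
  proof
    fix j
    show "w j = flip i v j"
    proof (cases "j = i")
      case True
      then show ?thesis using differ[of i] cube_coord[OF cubes(1), of i] cube_coord[OF cubes(2), of i]
        by (auto simp: flip_def)
    next
      case False
      then show ?thesis using differ[of j] by (simp add: flip_def)
    qed
  qed
  ultimately show "v \<in> cube m \<and> (\<exists>i<m. w = flip i v)" using cubes by blast
next
  assume "v \<in> cube m \<and> (\<exists>i<m. w = flip i v)"
  then obtain i where v: "v \<in> cube m" and i: "i < m" "w = flip i v" by blast
  moreover have "v i \<noteq> 1 - v i" using cube_coord[OF v, of i] by auto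
  ultimately have "{j. v j \<noteq> w j} = {i}" by (auto simp: flip_def)
  then show "adj m v w" using v i flip_in_cube by (simp add: adj_def)
qed

lemma adj_flip: "v \<in> cube m \<Longrightarrow> i < m \<Longrightarrow> adj m v (flip i v)"
  by (auto simp: adj_iff_flip)

lemma local_max_iff_flip:
  "local_max m g v \<longleftrightarrow> v \<in> cube m \<and> (\<forall>i<m. g (flip i v) \<le> g v)"
  by (auto simp: local_max_def adj_iff_flip)

lemma successively_iff_nth:
  "successively P xs \<longleftrightarrow> (\<forall>j. j + 1 < length xs \<longrightarrow> P (xs ! j) (xs ! (j+1)))"
proof (induction xs)
  case (Cons x xs)
  have "(\<forall>j. j + 1 < length (x # xs) \<longrightarrow> P ((x # xs) ! j) ((x # xs) ! (j+1))) \<longleftrightarrow>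
      (xs \<noteq> [] \<longrightarrow> P x (hd xs)) \<and> (\<forall>j. j + 1 < length xs \<longrightarrow> P (xs ! j) (xs ! (j+1)))"
    by (auto simp: hd_conv_nth nth_Cons split: nat.split)
  then show ?case using Cons.IH by (auto simp: successively_Cons)
qed simp

lemma increasing_path_iff_successively:
  "increasing_path m g vs \<longleftrightarrow>
     vs \<noteq> [] \<and> set vs \<subseteq> cube m \<and> successively (\<lambda>v w. adj m v w \<and> g v < g w) vs"
  by (simp add: increasing_path_def successively_iff_nth)

definition ascent ::
    "nat \<Rightarrow> ((nat \<Rightarrow> int) \<Rightarrow> int) \<Rightarrow> (nat \<Rightarrow> int) \<Rightarrow> (nat \<Rightarrow> int) list \<Rightarrow> bool" where
  "ascent m g u vs \<longleftrightarrow> increasing_path m g vs \<and> hd vs = (\<lambda>_. 0) \<and> last vs = u"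

lemma ascent_origin: "ascent m g (\<lambda>_. 0) [\<lambda>_. 0]"
  by (simp add: ascent_def increasing_path_def zero_in_cube)

lemma increasing_path_snoc:
  "vs \<noteq> [] \<Longrightarrow> increasing_path m g (vs @ [w]) \<longleftrightarrow>
     increasing_path m g vs \<and> adj m (last vs) w \<and> g (last vs) < g w"
  by (auto simp: increasing_path_iff_successively successively_append_iff adj_def)

lemma ascent_snoc:
  assumes "ascent m g u vs" "adj m u w" "g u < g w"
  shows "ascent m g w (vs @ [w])"
proof -
  have "vs \<noteq> []" using assms(1) by (simp add: ascent_def increasing_path_def)
  then show ?thesis using assms by (simp add: ascent_def increasing_path_snoc hd_append2)
qed

lemma ascent_induct [consumes 1, case_names origin snoc]:
  assumes "ascent m g u vs"
    and base: "P (\<lambda>_. 0) [\<lambda>_. 0]"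
    and step: "\<And>u vs w. ascent m g u vs \<Longrightarrow> P u vs \<Longrightarrow> adj m u w \<Longrightarrow> g u < g w
      \<Longrightarrow> P w (vs @ [w])"
  shows "P u vs"
  using assms(1)
proof (induction vs arbitrary: u rule: rev_induct)
  case Nil
  then show ?case by (simp add: ascent_def increasing_path_def)
next
  case (snoc w vs)
  show ?case
  proof (cases "vs = []")
    case True
    then show ?thesis using snoc.prems base by (auto simp: ascent_def)
  next
    case False
    then have "ascent m g (last vs) vs" "adj m (last vs) w" "g (last vs) < g w" "u = w"
      using snoc.prems by (auto simp: ascent_def increasing_path_snoc)
    then show ?thesis using snoc.IH step by blast
  qed
qed

lemma ascent_in_cube: "ascent m g u vs \<Longrightarrow> u \<in> cube m"
  by (auto simp: ascent_def increasing_path_def)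

lemma ascent_distinct: "ascent m g u vs \<Longrightarrow> distinct vs \<and> (\<forall>v\<in>set vs. g v \<le> g u)"
proof (induction rule: ascent_induct)
  case (snoc u vs w)
  then have "w \<notin> set vs" by force
  then show ?case using snoc.IH snoc.hyps(3) by fastforce
qed simp

lemma ascent_length_le_card: "ascent m g u vs \<Longrightarrow> length vs \<le> card (cube m)"
proof -
  assume vs: "ascent m g u vs"
  then have "length vs = card (set vs)" using ascent_distinct distinct_card by metis
  also have "\<dots> \<le> card (cube m)"
    using vs finite_cube by (intro card_mono) (auto simp: ascent_def increasing_path_def)
  finally show ?thesis .
qed

text \<open>A vertex of maximal value among those reachable from the origin is a local maximum.\<close>
lemma ex_ascent_local_max: "\<exists>u vs. ascent m g u vs \<and> local_max m g u"
proof -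
  define R where "R = {u. \<exists>vs. ascent m g u vs}"
  have "finite R" by (rule finite_subset[OF _ finite_cube]) (auto simp: R_def dest: ascent_in_cube)
  moreover have "R \<noteq> {}" using ascent_origin by (auto simp: R_def)
  ultimately obtain u where u: "u \<in> R" "g u = Max (g ` R)"
    by (metis (mono_tags, lifting) Max_in finite_imageI image_iff image_is_empty)
  have "local_max m g u"
    unfolding local_max_def
  proof (intro conjI allI impI)
    show "u \<in> cube m" using u ascent_in_cube by (auto simp: R_def)
    fix w assume "adj m u w"
    then have "g w \<le> g u \<or> w \<in> R" using u(1) ascent_snoc by (force simp: R_def)
    then show "g w \<le> g u" using u \<open>finite R\<close> by auto
  qed
  then show ?thesis using u(1) by (auto simp: R_def)
qed

lemma finite_local_max_path_lengths:
  "finite {length vs - 1 | vs. increasing_path m g vs \<and> hd vs = (\<lambda>_. 0) \<and> local_max m g (last vs)}"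
    (is "finite ?S")
proof (rule finite_subset)
  show "?S \<subseteq> {..card (cube m)}"
  proof
    fix x assume "x \<in> ?S"
    then obtain vs where "x = length vs - 1" "increasing_path m g vs" "hd vs = (\<lambda>_. 0)" by blast
    then show "x \<in> {..card (cube m)}"
      using ascent_length_le_card[of m g "last vs" vs] by (simp add: ascent_def)
  qed
qed simp

lemma p_le_ascent_length:
  assumes "ascent n (f n) u vs" "local_max n (f n) u"
  shows "p n \<le> length vs - 1"
proof -
  have "length vs - 1 \<in> {length vs - 1 | vs. increasing_path n (f n) vs \<and> hd vs = (\<lambda>_. 0)
      \<and> local_max n (f n) (last vs)}"
    using assms unfolding ascent_def by blast
  then show ?thesis unfolding p_def by (rule Min_le[OF finite_local_max_path_lengths])
qed

lemma p_attained: "\<exists>u vs. ascent n (f n) u vs \<and> local_max n (f n) u \<and> p n = length vs - 1"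
proof -
  let ?S = "{length vs - 1 | vs. increasing_path n (f n) vs \<and> hd vs = (\<lambda>_. 0)
      \<and> local_max n (f n) (last vs)}"
  have "?S \<noteq> {}" using ex_ascent_local_max[of n "f n"] unfolding ascent_def by blast
  then have "p n \<in> ?S" unfolding p_def by (rule Min_in[OF finite_local_max_path_lengths])
  then show ?thesis unfolding ascent_def by blast
qed

section \<open>One step of the recursion\<close>

definition proj :: "nat \<Rightarrow> (nat \<Rightarrow> int) \<Rightarrow> nat \<Rightarrow> int" where
  "proj n v = (\<lambda>i. if i < n then v i else 0)"

definition weight :: "nat \<Rightarrow> (nat \<Rightarrow> int) \<Rightarrow> int" where
  "weight n v = (\<Sum>i<n. v i)"

definition ctrl :: "nat \<Rightarrow> (nat \<Rightarrow> int) \<Rightarrow> nat \<Rightarrow> int" where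
  "ctrl n v = (\<lambda>j. if j < 4 then v (n + j) else 0)"

definition Mk :: "nat \<Rightarrow> int" where
  "Mk k = Max (fk k ` cube (4*k+2)) - Min (fk k ` cube (4*k+2)) + 1"

text \<open>The terms of f(n+4) beyond f(n), as a function of M = M(n), N = n, s = S and the control
  coordinates c 0, ..., c 3 = x(n+1), ..., x(n+4).\<close>
definition lift_term :: "int \<Rightarrow> int \<Rightarrow> int \<Rightarrow> (nat \<Rightarrow> int) \<Rightarrow> int" where
  "lift_term M N s c = - M * N^2 * c 0 + M * (N+1) * s * c 0 - c 1 - 2 * M * N * s * c 1
     + 2 * M * N * (N+2) * c 0 * c 1 - 4 * s * c 2 + 2 * c 0 * c 2 + 2 * c 1 * c 2 - 3 * c 2
     + (M * (N - 1) + 4) * s * c 3 + 6 * M * N^2 * c 2 * c 3 - 5 * M * N^2 * c 3"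

lemma fk_cong: "(\<And>i. i < 4*k+2 \<Longrightarrow> v i = w i) \<Longrightarrow> fk k v = fk k w"
proof (induction k arbitrary: v w)
  case (Suc k)
  let ?n = "4*k+2"
  have "fk k v = fk k w" by (rule Suc.IH) (use Suc.prems in simp)
  moreover have "(\<Sum>i<?n. v i) = (\<Sum>i<?n. w i)" using Suc.prems by (intro sum.cong) auto
  moreover have "v ?n = w ?n" "v (?n+1) = w (?n+1)" "v (?n+2) = w (?n+2)" "v (?n+3) = w (?n+3)"
    using Suc.prems by auto
  ultimately show ?case by (simp only: fk.simps(2) Let_def)
qed simp

lemma fk_proj: "fk k (proj (4*k+2) v) = fk k v"
  by (rule fk_cong) (simp add: proj_def)

lemma fk_Suc_split:
  "fk (Suc k) v = fk k (proj (4*k+2) v)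
     + lift_term (Mk k) (int (4*k+2)) (weight (4*k+2) v) (ctrl (4*k+2) v)"
proof -
  define N where "N = int (4*k+2)"
  have "ctrl (4*k+2) v 0 = v (4*k+2)" "ctrl (4*k+2) v 1 = v (4*k+2+1)"
    "ctrl (4*k+2) v 2 = v (4*k+2+2)" "ctrl (4*k+2) v 3 = v (4*k+2+3)"
    by (simp_all add: ctrl_def)
  then show ?thesis
    unfolding fk.simps(2) Let_def fk_proj Mk_def[symmetric] weight_def[symmetric] N_def[symmetric]
      lift_term_def
    by (simp add: algebra_simps)
qed

lemma Mk_pos: "1 \<le> Mk k"
proof -
  let ?A = "fk k ` cube (4*k+2)"
  have "finite ?A" "fk k (\<lambda>_. 0) \<in> ?A" using finite_cube zero_in_cube by auto
  then have "Min ?A \<le> Max ?A" by (meson Max_ge Min_le order_trans)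
  then show ?thesis by (simp add: Mk_def)
qed

lemma fk_diff_lt_Mk: "x \<in> cube (4*k+2) \<Longrightarrow> y \<in> cube (4*k+2) \<Longrightarrow> fk k x - fk k y < Mk k"
proof -
  let ?A = "fk k ` cube (4*k+2)"
  assume "x \<in> cube (4*k+2)" "y \<in> cube (4*k+2)"
  then have "fk k x \<le> Max ?A" "Min ?A \<le> fk k y" using finite_cube by auto
  then show ?thesis by (simp add: Mk_def)
qed

lemma proj_in_cube:
  assumes "v \<in> cube m"
  shows "proj n v \<in> cube n"
  using cube_coord[OF assms] by (auto simp: cube_def proj_def)

lemma proj_flip_low: "i < n \<Longrightarrow> proj n (flip i v) = flip i (proj n v)"
  by (auto simp: proj_def flip_def)

lemma proj_flip_high: "n \<le> i \<Longrightarrow> proj n (flip i v) = proj n v"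
  by (auto simp: proj_def flip_def)

lemma ctrl_flip_low: "i < n \<Longrightarrow> ctrl n (flip i v) = ctrl n v"
  by (auto simp: ctrl_def flip_def)

lemma ctrl_flip_high: "j < 4 \<Longrightarrow> ctrl n (flip (n + j) v) = flip j (ctrl n v)"
  by (auto simp: ctrl_def flip_def)

lemma weight_flip_low:
  assumes "i < n"
  shows "weight n (flip i v) = weight n v + 1 - 2 * v i"
proof -
  have "weight n (flip i v) - weight n v = (\<Sum>j<n. if j = i then 1 - 2 * v i else 0)"
    unfolding weight_def sum_subtractf[symmetric] by (intro sum.cong) (auto simp: flip_def)
  then show ?thesis using assms by simp
qed

lemma weight_flip_high: "n \<le> i \<Longrightarrow> weight n (flip i v) = weight n v"
  unfolding weight_def by (intro sum.cong) (auto simp: flip_def)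

lemma weight_bounds:
  assumes "v \<in> cube m"
  shows "0 \<le> weight n v \<and> weight n v \<le> int n"
proof -
  have "0 \<le> v i \<and> v i \<le> 1" for i using cube_coord[OF assms, of i] by auto
  then have "0 \<le> weight n v" "weight n v \<le> (\<Sum>i<n. 1)"
    unfolding weight_def by (intro sum_nonneg sum_mono; simp)+
  then show ?thesis by simp
qed

lemma weight_eq_0_iff:
  assumes "v \<in> cube m"
  shows "weight n v = 0 \<longleftrightarrow> proj n v = (\<lambda>_. 0)"
proof -
  have "0 \<le> v i" for i using cube_coord[OF assms, of i] by auto
  then have "weight n v = 0 \<longleftrightarrow> (\<forall>i\<in>{..<n}. v i = 0)" by (simp add: weight_def sum_nonneg_eq_0_iff)
  then show ?thesis by (auto simp: proj_def fun_eq_iff)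
qed

lemma weight_eq_n_iff:
  assumes "v \<in> cube m"
  shows "weight n v = int n \<longleftrightarrow> proj n v = ones n"
proof -
  have "0 \<le> 1 - v i" for i using cube_coord[OF assms, of i] by auto
  then have "(\<Sum>i<n. 1 - v i) = 0 \<longleftrightarrow> (\<forall>i\<in>{..<n}. 1 - v i = 0)" by (simp add: sum_nonneg_eq_0_iff)
  moreover have "(\<Sum>i<n. 1 - v i) = int n - weight n v" by (simp add: weight_def sum_subtractf)
  ultimately have "weight n v = int n \<longleftrightarrow> (\<forall>i\<in>{..<n}. v i = 1)" by auto
  then show ?thesis by (auto simp: proj_def ones_def fun_eq_iff)
qed

section \<open>The control coordinates\<close>

text \<open>Along an ascent from the origin the control coordinates are switched on one at a time and
  in order, so the control word is stage q for some q \<le> 4; in stage 1 the low part is all ones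
  and in stage 3 it is all zeros.\<close>
definition stage :: "nat \<Rightarrow> nat \<Rightarrow> int" where
  "stage q = (\<lambda>j. if j < q then 1 else 0)"

definition admissible :: "int \<Rightarrow> int \<Rightarrow> nat \<Rightarrow> bool" where
  "admissible N s q \<longleftrightarrow> q \<le> 4 \<and> (q = 1 \<longrightarrow> s = N) \<and> (q = 3 \<longrightarrow> s = 0)"

lemma flip_stage: "flip q (stage q) = stage (Suc q)"
  by (auto simp: flip_def stage_def fun_eq_iff)

lemma lift_term_stage_0: "lift_term M N s (stage 0) = 0"
  by (simp add: lift_term_def stage_def)

lemma lift_term_stage_4: "lift_term M N s (stage 4) = 2 * M * N^2 + 4 * M * N"
  by (simp add: lift_term_def stage_def algebra_simps power2_eq_square)

lemma lift_term_stage_succ: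
  "lift_term M N (s + 1) (stage 1) = lift_term M N s (stage 1) + M + M * N"
  "lift_term M N (s + 1) (stage 2) = lift_term M N s (stage 2) + M - M * N"
  "lift_term M N (s + 1) (stage 3) = lift_term M N s (stage 3) + M - M * N - 4"
  by (simp_all add: lift_term_def stage_def algebra_simps)

text \<open>Renaming the products M N, M N^2, M s and M N s turns comparisons of values of lift_term into
  linear arithmetic.\<close>
lemma lift_term_linearization:
  fixes M N s :: int
  assumes "1 \<le> M" "2 \<le> N" "0 \<le> s" "s \<le> N"
  obtains R T Q P where
    "\<And>c. lift_term M N s c = c 0 * (R + T - Q) - c 1 - 2 * T * c 1 + 2 * c 0 * c 1 * (Q + 2 * P)
       - 4 * s * c 2 + 2 * c 0 * c 2 + 2 * c 1 * c 2 - 3 * c 2 + c 3 * (T - R + 4 * s)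
       + 6 * c 2 * c 3 * Q - 5 * c 3 * Q"
    and "2 * M \<le> P" "2 * P \<le> Q" "N \<le> P" "0 \<le> R" "R \<le> P" "0 \<le> T" "T \<le> Q"
    and "s \<le> N - 1 \<Longrightarrow> T \<le> Q - P \<and> R \<le> P - M"
    and "s = N \<Longrightarrow> T = Q \<and> R = P" and "s = 0 \<Longrightarrow> T = 0 \<and> R = 0"
proof
  show "lift_term M N s c = c 0 * (M * s + M * N * s - M * N * N) - c 1 - 2 * (M * N * s) * c 1
      + 2 * c 0 * c 1 * (M * N * N + 2 * (M * N)) - 4 * s * c 2 + 2 * c 0 * c 2 + 2 * c 1 * c 2
      - 3 * c 2 + c 3 * (M * N * s - M * s + 4 * s) + 6 * c 2 * c 3 * (M * N * N)
      - 5 * c 3 * (M * N * N)" for c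
    by (simp add: lift_term_def algebra_simps power2_eq_square)
  have MN: "0 \<le> M * N" using assms by simp
  show "2 * M \<le> M * N" "N \<le> M * N" "0 \<le> M * s" "M * s \<le> M * N" "0 \<le> M * N * s"
    using assms by (simp_all add: mult_left_mono mult_right_mono[of 1 M N, simplified])
  show "2 * (M * N) \<le> M * N * N" "M * N * s \<le> M * N * N"
    using assms MN by (simp_all add: mult_left_mono mult.commute[of 2])
  show "M * N * s \<le> M * N * N - M * N \<and> M * s \<le> M * N - M" if "s \<le> N - 1"
  proof -
    have "M * N * s \<le> M * N * (N - 1)" "M * s \<le> M * (N - 1)"
      using that assms MN by (simp_all add: mult_left_mono)
    then show ?thesis by (simp add: algebra_simps)
  qed
qed simp_all

lemma lift_term_flip_stage_iff:
  fixes M N s :: int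
  assumes "1 \<le> M" "2 \<le> N" "0 \<le> s" "s \<le> N" and "admissible N s q" "j < 4"
  shows "lift_term M N s (stage q) < lift_term M N s (flip j (stage q))
    \<longleftrightarrow> j = q \<and> admissible N s (Suc q)"
proof -
  obtain R T Q P where lin: "\<And>c. lift_term M N s c = c 0 * (R + T - Q) - c 1 - 2 * T * c 1
       + 2 * c 0 * c 1 * (Q + 2 * P) - 4 * s * c 2 + 2 * c 0 * c 2 + 2 * c 1 * c 2 - 3 * c 2
       + c 3 * (T - R + 4 * s) + 6 * c 2 * c 3 * Q - 5 * c 3 * Q"
    and bounds: "2 * M \<le> P" "2 * P \<le> Q" "N \<le> P" "0 \<le> R" "R \<le> P" "0 \<le> T" "T \<le> Q"
    and below: "s \<le> N - 1 \<Longrightarrow> T \<le> Q - P \<and> R \<le> P - M"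
    and full: "s = N \<Longrightarrow> T = Q \<and> R = P" and empty: "s = 0 \<Longrightarrow> T = 0 \<and> R = 0"
    by (rule lift_term_linearization[OF assms(1-4)]) (rule that)
  have q: "q = 0 \<or> q = 1 \<or> q = 2 \<or> q = 3 \<or> q = 4" using assms(5) by (auto simp: admissible_def)
  have "j = q \<and> admissible N s (Suc q)"
    if "lift_term M N s (stage q) < lift_term M N s (flip j (stage q))"
  proof -
    have "j = 0 \<or> j = 1 \<or> j = 2 \<or> j = 3" using assms(6) by auto
    moreover have "(s = N \<and> T = Q \<and> R = P) \<or> (s \<le> N - 1 \<and> T \<le> Q - P \<and> R \<le> P - M)"
      using below full assms(4) by (cases "s = N") auto
    ultimately show ?thesis
      using q that assms(1,3,5) bounds unfolding lin
      by (elim disjE conjE; simp add: admissible_def stage_def flip_def; linarith)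
  qed
  moreover have "lift_term M N s (stage q) < lift_term M N s (flip q (stage q))"
    if "admissible N s (Suc q)"
  proof -
    have "(q = 0 \<or> q = 1) \<and> T = Q \<and> R = P \<or> (q = 2 \<or> q = 3) \<and> s = 0 \<and> T = 0 \<and> R = 0"
      using q that assms(5) full empty by (auto simp: admissible_def)
    then show ?thesis
      using assms(1) bounds unfolding lin
      by (elim disjE conjE; simp add: stage_def flip_def; linarith)
  qed
  ultimately show ?thesis by blast
qed

definition on_track :: "nat \<Rightarrow> (nat \<Rightarrow> int) \<Rightarrow> nat \<Rightarrow> bool" where
  "on_track n v q \<longleftrightarrow> ctrl n v = stage q \<and> admissible (int n) (weight n v) q"

lemma on_track_origin: "on_track n (\<lambda>_. 0) 0"
  by (simp add: on_track_def ctrl_def stage_def weight_def admissible_def fun_eq_iff)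

lemma on_track_ones: "on_track n (ones (n+4)) 4"
  by (simp add: on_track_def ctrl_def stage_def weight_def admissible_def ones_def fun_eq_iff)

lemma proj_ones: "proj n (ones (n+4)) = ones n"
  by (simp add: proj_def ones_def fun_eq_iff)

lemma eq_ones_if_proj_ctrl:
  assumes "v \<in> cube (n+4)" "proj n v = ones n" "ctrl n v = stage 4"
  shows "v = ones (n+4)"
proof
  fix i
  consider "i < n" | j where "j < 4" "i = n + j" | "n + 4 \<le> i" by (metis add_diff_inverse_nat
    nat_add_left_cancel_less not_le)
  then show "v i = ones (n+4) i"
  proof cases
    case 1
    then show ?thesis using fun_cong[OF assms(2), of i] by (simp add: proj_def ones_def)
  next
    case 2
    then show ?thesis using fun_cong[OF assms(3), of j] by (simp add: ctrl_def stage_def ones_def)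
  next
    case 3
    then show ?thesis using cube_coord_outside[OF assms(1)] by (simp add: ones_def)
  qed
qed

context
  fixes k n :: nat
  assumes n: "n = 4*k+2"
begin

lemma fk_Suc_eq: "fk (Suc k) v = fk k (proj n v) + lift_term (Mk k) (int n) (weight n v) (ctrl n v)"
  using fk_Suc_split n by simp

lemma fk_proj_diff_lt: "v \<in> cube m \<Longrightarrow> w \<in> cube m' \<Longrightarrow> fk k (proj n v) - fk k (proj n w) < Mk k"
  using fk_diff_lt_Mk proj_in_cube n by blast

lemma two_Mk_le: "2 * Mk k \<le> Mk k * int n"
  using Mk_pos[of k] n by (simp add: mult_left_mono[of 2 "int n" "Mk k", simplified] mult.commute)

lemma control_flip_iff:
  assumes "v \<in> cube (n+4)" "admissible (int n) (weight n v) q" "j < 4"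
  shows "lift_term (Mk k) (int n) (weight n v) (stage q)
      < lift_term (Mk k) (int n) (weight n v) (flip j (stage q))
    \<longleftrightarrow> j = q \<and> admissible (int n) (weight n v) (Suc q)"
  using weight_bounds[OF assms(1), of n] n by (intro lift_term_flip_stage_iff Mk_pos assms(2,3)) auto

lemma on_track_low_step:
  assumes v: "v \<in> cube (n+4)" and track: "on_track n v q" and i: "i < n"
    and up: "fk (Suc k) v < fk (Suc k) (flip i v)"
  shows "on_track n (flip i v) q \<and> (q = 0 \<or> q = 4 \<longrightarrow> fk k (proj n v) < fk k (proj n (flip i v)))"
proof -
  define M where "M = Mk k"
  define N where "N = int n"
  define s where "s = weight n v"
  define w where "w = flip i v"
  have w: "w \<in> cube (n+4)" using flip_in_cube v i w_def by simp
  have ctrl: "ctrl n w = stage q" using track ctrl_flip_low[OF i] by (simp add: on_track_def w_def)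
  have rise: "fk k (proj n v) - fk k (proj n w)
      < lift_term M N (weight n w) (stage q) - lift_term M N s (stage q)"
    using up track ctrl unfolding fk_Suc_eq M_def N_def s_def w_def by (simp add: on_track_def)
  have gap: "fk k (proj n w) - fk k (proj n v) < M" using fk_proj_diff_lt v w M_def by blast
  have MN: "2 * M \<le> M * N" using two_Mk_le M_def N_def by simp
  \<comment> \<open>In stages 1 and 3 a low flip drives S away from n resp. 0, which costs the extra term more
    than the at most M that f(n) can gain.\<close>
  have "q \<noteq> 1"
  proof
    assume q: "q = 1"
    then have "proj n v = ones n" using track weight_eq_n_iff[OF v] by (simp add: on_track_def admissible_def)
    then have "v i = 1" using fun_cong[of _ _ i] i by (fastforce simp: proj_def ones_def)
    then have "weight n w + 1 = s" using weight_flip_low[OF i] by (simp add: w_def s_def)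
    then have "lift_term M N (weight n w) (stage q) = lift_term M N s (stage q) - M - M * N"
      using lift_term_stage_succ(1)[of M N "weight n w"] q by simp
    then show False using rise gap MN Mk_pos[of k] M_def by linarith
  qed
  moreover have "q \<noteq> 3"
  proof
    assume q: "q = 3"
    then have "proj n v = (\<lambda>_. 0)" using track weight_eq_0_iff[OF v] by (simp add: on_track_def admissible_def)
    then have "v i = 0" using fun_cong[of _ _ i] i by (fastforce simp: proj_def)
    then have "weight n w = s + 1" using weight_flip_low[OF i] by (simp add: w_def s_def)
    then have "lift_term M N (weight n w) (stage q) = lift_term M N s (stage q) + M - M * N - 4"
      using lift_term_stage_succ(3)[of M N s] q by simp
    then show False using rise gap MN by linarith
  qed
  moreover have "fk k (proj n v) < fk k (proj n w)" if "q = 0 \<or> q = 4"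
    using rise that lift_term_stage_0 lift_term_stage_4 by auto
  ultimately show ?thesis using track ctrl by (auto simp: on_track_def admissible_def w_def)
qed

lemma on_track_high_step:
  assumes v: "v \<in> cube (n+4)" and track: "on_track n v q" and j: "j < 4"
    and up: "fk (Suc k) v < fk (Suc k) (flip (n+j) v)"
  shows "j = q \<and> on_track n (flip (n+j) v) (Suc q)"
proof -
  define s where "s = weight n v"
  have adm: "admissible (int n) s q" using track s_def by (simp add: on_track_def)
  have same: "proj n (flip (n+j) v) = proj n v" "weight n (flip (n+j) v) = s"
    using proj_flip_high weight_flip_high s_def by auto
  have ctrl: "ctrl n (flip (n+j) v) = flip j (stage q)"
    using ctrl_flip_high[OF j] track by (simp add: on_track_def)
  have "lift_term (Mk k) (int n) s (stage q) < lift_term (Mk k) (int n) s (flip j (stage q))"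
    using up track same ctrl unfolding fk_Suc_eq s_def by (simp add: on_track_def)
  then have next_stage: "j = q \<and> admissible (int n) s (Suc q)"
    using control_flip_iff[OF v adm[unfolded s_def] j] s_def by blast
  then have "ctrl n (flip (n+j) v) = stage (Suc q)" using ctrl flip_stage by simp
  then show ?thesis using next_stage same by (simp add: on_track_def)
qed

lemma on_track_local_max_stage:
  assumes max: "local_max (n+4) (fk (Suc k)) v" and track: "on_track n v q"
  shows "(q = 0 \<and> proj n v \<noteq> ones n) \<or> q = 4"
proof (rule ccontr)
  assume contra: "\<not> ?thesis"
  have v: "v \<in> cube (n+4)" and le: "\<And>i. i < n+4 \<Longrightarrow> fk (Suc k) (flip i v) \<le> fk (Suc k) v"
    using max by (auto simp: local_max_iff_flip)
  define s where "s = weight n v"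
  have ctrl: "ctrl n v = stage q" and adm: "admissible (int n) s q"
    using track s_def by (simp_all add: on_track_def)
  have q: "q < 4" using adm contra by (auto simp: admissible_def)
  \<comment> \<open>Some flip increases f(n+4): the next control coordinate, unless the stage is 2 and the
    low part is nonempty; then clearing a low coordinate gains M n - M \<ge> M in the extra term.\<close>
  show False
  proof (cases "q = 2 \<and> s \<noteq> 0")
    case True
    then have "proj n v \<noteq> (\<lambda>_. 0)" using weight_eq_0_iff[OF v] s_def by simp
    then obtain i where "proj n v i \<noteq> 0" by (meson ext)
    then have i: "i < n" "v i = 1" using cube_coord[OF v, of i] by (auto simp: proj_def split: if_splits)
    then have "weight n (flip i v) + 1 = s" using weight_flip_low[OF i(1)] s_def by simp
    then have "lift_term (Mk k) (int n) (weight n (flip i v)) (stage q)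
        = lift_term (Mk k) (int n) s (stage q) + Mk k * int n - Mk k"
      using lift_term_stage_succ(2)[of "Mk k" "int n" "weight n (flip i v)"] True by simp
    moreover have "flip i v \<in> cube (n+4)" using flip_in_cube[OF v] i by simp
    then have "fk k (proj n v) - fk k (proj n (flip i v)) < Mk k" using fk_proj_diff_lt v by blast
    ultimately have "fk (Suc k) v < fk (Suc k) (flip i v)"
      unfolding fk_Suc_eq ctrl_flip_low[OF i(1)] ctrl s_def[symmetric] using two_Mk_le by linarith
    then show False using le[of i] i by simp
  next
    case False
    have "q = 0 \<Longrightarrow> s = int n" using contra weight_eq_n_iff[OF v] s_def by auto
    then have "admissible (int n) s (Suc q)" using False q by (auto simp: admissible_def)
    then have "lift_term (Mk k) (int n) s (stage q) < lift_term (Mk k) (int n) s (stage (Suc q))"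
      using control_flip_iff[OF v adm[unfolded s_def] q] flip_stage s_def by simp
    moreover have "proj n (flip (n+q) v) = proj n v" "weight n (flip (n+q) v) = s"
      "ctrl n (flip (n+q) v) = stage (Suc q)"
      using proj_flip_high weight_flip_high ctrl_flip_high[OF q] ctrl flip_stage s_def by auto
    ultimately have "fk (Suc k) v < fk (Suc k) (flip (n+q) v)"
      unfolding fk_Suc_eq ctrl s_def[symmetric] by simp
    then show False using le[of "n+q"] q by simp
  qed
qed

lemma on_track_local_max_proj:
  assumes max: "local_max (n+4) (fk (Suc k)) v" and track: "on_track n v q" and q: "q = 0 \<or> q = 4"
  shows "local_max n (fk k) (proj n v)"
proof -
  have v: "v \<in> cube (n+4)" and le: "\<And>i. i < n+4 \<Longrightarrow> fk (Suc k) (flip i v) \<le> fk (Suc k) v"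
    using max by (auto simp: local_max_iff_flip)
  have "fk k (flip i (proj n v)) \<le> fk k (proj n v)" if i: "i < n" for i
    using le[of i] i q track unfolding fk_Suc_eq
    by (auto simp: on_track_def proj_flip_low ctrl_flip_low lift_term_stage_0 lift_term_stage_4)
  then show ?thesis using proj_in_cube[OF v] by (simp add: local_max_iff_flip)
qed

lemma local_max_ones_lift:
  assumes top: "local_max n (fk k) (ones n)"
  shows "local_max (n+4) (fk (Suc k)) (ones (n+4))"
proof -
  have "fk (Suc k) (flip i (ones (n+4))) \<le> fk (Suc k) (ones (n+4))" if i: "i < n+4" for i
  proof (cases "i < n")
    case True
    then have "fk k (flip i (ones n)) \<le> fk k (ones n)" using top by (simp add: local_max_iff_flip)
    then show ?thesis
      using True on_track_ones[of n] unfolding fk_Suc_eq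
      by (simp add: on_track_def proj_flip_low ctrl_flip_low proj_ones lift_term_stage_4)
  next
    case False
    then obtain j where j: "j < 4" "i = n + j" using i by (metis add_diff_inverse_nat add_less_imp_less_left)
    show ?thesis
    proof (rule ccontr)
      assume "\<not> ?thesis"
      then have "j = 4" using on_track_high_step[OF ones_in_cube on_track_ones j(1)] j(2) by simp
      then show False using j(1) by simp
    qed
  qed
  then show ?thesis using ones_in_cube by (simp add: local_max_iff_flip)
qed

end

section \<open>Ascents of f(n+4) project to two ascents of f(n)\<close>

text \<open>In stage 0 the low part of an ascent of f(n+4) is itself an ascent of g; a first ascent of g
  ends at the all-ones vertex when stage 1 is entered, and a second one starts at the origin when
  stage 4 is entered.\<close>
definition projected_ascents ::
    "nat \<Rightarrow> ((nat \<Rightarrow> int) \<Rightarrow> int) \<Rightarrow> (nat \<Rightarrow> int) \<Rightarrow> nat \<Rightarrow> nat \<Rightarrow> bool" where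
  "projected_ascents n g u L q \<longleftrightarrow>
     (q = 0 \<longrightarrow> (\<exists>ws. ascent n g (proj n u) ws \<and> length ws \<le> L)) \<and>
     (0 < q \<longrightarrow> (\<exists>ws. ascent n g (ones n) ws \<and> length ws < L)) \<and>
     (q = 4 \<longrightarrow> (\<exists>ws1 ws2. ascent n g (ones n) ws1 \<and> ascent n g (proj n u) ws2
                   \<and> length ws1 + length ws2 \<le> L))"

lemma projected_ascents_origin: "projected_ascents n g (\<lambda>_. 0) 1 0"
proof -
  have "proj n (\<lambda>_. 0) = (\<lambda>_. 0)" by (simp add: proj_def)
  then show ?thesis using ascent_origin by (fastforce simp: projected_ascents_def)
qed

lemma projected_ascents_low_step:
  assumes "projected_ascents n g u L q" "adj n (proj n u) (proj n w)"
    and "q = 0 \<or> q = 4 \<Longrightarrow> g (proj n u) < g (proj n w)"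
  shows "projected_ascents n g w (Suc L) q"
proof -
  have "q = 0 \<Longrightarrow> \<exists>ws. ascent n g (proj n w) ws \<and> length ws \<le> Suc L"
    using assms ascent_snoc by (fastforce simp: projected_ascents_def)
  moreover have "q = 4 \<Longrightarrow> \<exists>ws1 ws2. ascent n g (ones n) ws1 \<and> ascent n g (proj n w) ws2
      \<and> length ws1 + length ws2 \<le> Suc L"
    using assms ascent_snoc by (fastforce simp: projected_ascents_def)
  moreover have "0 < q \<Longrightarrow> \<exists>ws. ascent n g (ones n) ws \<and> length ws < Suc L"
    using assms(1) less_SucI by (fastforce simp: projected_ascents_def)
  ultimately show ?thesis by (simp add: projected_ascents_def)
qed

lemma projected_ascents_high_step:
  assumes "projected_ascents n g u L q" "u \<in> cube m"
    and "admissible (int n) (weight n u) q" "admissible (int n) (weight n u) (Suc q)"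
    and "proj n w = proj n u"
  shows "projected_ascents n g w (Suc L) (Suc q)"
proof -
  have first: "\<exists>ws. ascent n g (ones n) ws \<and> length ws < Suc L"
  proof (cases q)
    case 0
    then have "proj n u = ones n" using assms(3,4) weight_eq_n_iff[OF assms(2)] by (simp add: admissible_def)
    then show ?thesis using assms(1) 0 by (fastforce simp: projected_ascents_def)
  next
    case (Suc _)
    then show ?thesis using assms(1) less_SucI by (fastforce simp: projected_ascents_def)
  qed
  moreover have "\<exists>ws1 ws2. ascent n g (ones n) ws1 \<and> ascent n g (proj n w) ws2
      \<and> length ws1 + length ws2 \<le> Suc L" if "Suc q = 4"
  proof -
    have "proj n w = (\<lambda>_. 0)"
      using that assms(3,5) weight_eq_0_iff[OF assms(2)] by (simp add: admissible_def)
    then show ?thesis using first ascent_origin by fastforce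
  qed
  ultimately show ?thesis by (simp add: projected_ascents_def)
qed

context
  fixes k n :: nat
  assumes n: "n = 4*k+2"
begin

lemma ascent_projected:
  assumes "ascent (n+4) (fk (Suc k)) u vs"
  shows "\<exists>q. on_track n u q \<and> projected_ascents n (fk k) u (length vs) q"
  using assms
proof (induction rule: ascent_induct)
  case origin
  then show ?case using on_track_origin projected_ascents_origin by fastforce
next
  case (snoc u vs w)
  obtain q where track: "on_track n u q" and proj: "projected_ascents n (fk k) u (length vs) q"
    using snoc.IH by blast
  obtain i where i: "i < n+4" "w = flip i u" and u: "u \<in> cube (n+4)"
    using snoc.hyps(2) by (auto simp: adj_iff_flip)
  have up: "fk (Suc k) u < fk (Suc k) (flip i u)" using snoc.hyps(3) i(2) by simp
  show ?case
  proof (cases "i < n")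
    case True
    have "adj n (proj n u) (proj n w)"
      using adj_flip[OF proj_in_cube[OF u] True] i(2) proj_flip_low[OF True] by simp
    moreover have "on_track n w q" "q = 0 \<or> q = 4 \<Longrightarrow> fk k (proj n u) < fk k (proj n w)"
      using on_track_low_step[OF n u track True up] i(2) by auto
    ultimately show ?thesis using projected_ascents_low_step[OF proj] by auto
  next
    case False
    then obtain j where j: "j < 4" "i = n + j" using i by (metis add_diff_inverse_nat add_less_imp_less_left)
    then have "on_track n w (Suc q)"
      using on_track_high_step[OF n u track j(1)] up i(2) by auto
    moreover have "proj n w = proj n u" "weight n w = weight n u"
      using i j proj_flip_high weight_flip_high by auto
    ultimately have "projected_ascents n (fk k) w (Suc (length vs)) (Suc q)"
      using projected_ascents_high_step[OF proj u] track by (simp add: on_track_def)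
    then show ?thesis using \<open>on_track n w (Suc q)\<close> by auto
  qed
qed

lemma ascent_local_max_lift:
  assumes unique: "\<forall>u ws. ascent n (fk k) u ws \<longrightarrow> local_max n (fk k) u \<longrightarrow> u = ones n"
    and vs: "ascent (n+4) (fk (Suc k)) u vs" and max: "local_max (n+4) (fk (Suc k)) u"
  shows "u = ones (n+4) \<and> (\<exists>ws1 ws2. ascent n (fk k) (ones n) ws1 \<and> ascent n (fk k) (ones n) ws2
           \<and> length ws1 + length ws2 \<le> length vs)"
proof -
  obtain q where track: "on_track n u q" and proj: "projected_ascents n (fk k) u (length vs) q"
    using ascent_projected[OF vs] by blast
  have stage: "(q = 0 \<and> proj n u \<noteq> ones n) \<or> q = 4"
    using on_track_local_max_stage[OF n max track] .
  then have top: "local_max n (fk k) (proj n u)"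
    using on_track_local_max_proj[OF n max track] by blast
  have "q = 4"
  proof (rule ccontr)
    assume "q \<noteq> 4"
    then have "q = 0" "proj n u \<noteq> ones n" using stage by auto
    moreover obtain ws where "ascent n (fk k) (proj n u) ws"
      using proj \<open>q = 0\<close> by (auto simp: projected_ascents_def)
    ultimately show False using unique top by blast
  qed
  then obtain ws1 ws2 where ws: "ascent n (fk k) (ones n) ws1" "ascent n (fk k) (proj n u) ws2"
    "length ws1 + length ws2 \<le> length vs"
    using proj by (auto simp: projected_ascents_def)
  then have "proj n u = ones n" using unique top by blast
  moreover have "u \<in> cube (n+4)" using vs ascent_in_cube by blast
  ultimately have "u = ones (n+4)" using eq_ones_if_proj_ctrl track \<open>q = 4\<close> by (simp add: on_track_def)
  then show ?thesis using ws \<open>proj n u = ones n\<close> by auto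
qed

end

section \<open>The induction on n\<close>

lemma fk_zero_flip: "i < 2 \<Longrightarrow> fk 0 (flip i v) = fk 0 v + 1 - 2 * v i"
  by (auto simp: flip_def less_2_cases_iff)

lemma local_max_fk_zero_iff: "local_max 2 (fk 0) u \<longleftrightarrow> u = ones 2"
proof
  assume "local_max 2 (fk 0) u"
  then have u: "u \<in> cube 2" and le: "\<And>i. i < 2 \<Longrightarrow> fk 0 (flip i u) \<le> fk 0 u"
    by (auto simp: local_max_iff_flip)
  have "u i = 1" if "i < 2" for i
    using le[OF that] fk_zero_flip[OF that] cube_coord[OF u, of i] by auto
  then show "u = ones 2" using cube_coord_outside[OF u] by (auto simp: ones_def fun_eq_iff)
next
  assume "u = ones 2"
  then show "local_max 2 (fk 0) u"
    using ones_in_cube fk_zero_flip by (auto simp: local_max_iff_flip ones_def)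
qed

lemma fk_zero_ascent: "ascent 2 (fk 0) u vs \<Longrightarrow> fk 0 u = int (length vs - 1)"
proof (induction rule: ascent_induct)
  case (snoc u vs w)
  obtain i where i: "i < 2" "w = flip i u" and u: "u \<in> cube 2"
    using snoc.hyps(2) by (auto simp: adj_iff_flip)
  have "u i = 0" using snoc.hyps(3) fk_zero_flip[OF i(1)] cube_coord[OF u, of i] i(2) by auto
  then have "fk 0 w = fk 0 u + 1" using fk_zero_flip[OF i(1)] i(2) by simp
  moreover have "vs \<noteq> []" using snoc.hyps(1) by (simp add: ascent_def increasing_path_def)
  ultimately show ?case using snoc.IH by (cases vs) auto
qed simp

lemma p_2: "p 2 = 2"
proof -
  have "f 2 = fk 0" by (simp add: f_def)
  then obtain u vs where vs: "ascent 2 (fk 0) u vs" "local_max 2 (fk 0) u" "p 2 = length vs - 1"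
    using p_attained[of 2] by metis
  then have "fk 0 u = 2" using local_max_fk_zero_iff by (simp add: ones_def)
  then show ?thesis using fk_zero_ascent[OF vs(1)] vs(3) by simp
qed

lemma fk_reachable_local_max:
  "local_max (4*k+2) (fk k) (ones (4*k+2)) \<and>
   (\<forall>u vs. ascent (4*k+2) (fk k) u vs \<longrightarrow> local_max (4*k+2) (fk k) u \<longrightarrow> u = ones (4*k+2))"
proof (induction k)
  case 0
  then show ?case using local_max_fk_zero_iff by (simp only: mult_0_right add_0) blast
next
  case (Suc k)
  define n where "n = 4*k+2"
  have top: "local_max n (fk k) (ones n)"
    and unique: "\<forall>u vs. ascent n (fk k) u vs \<longrightarrow> local_max n (fk k) u \<longrightarrow> u = ones n"
    using Suc.IH n_def by auto
  have "local_max (n+4) (fk (Suc k)) (ones (n+4))" using local_max_ones_lift[OF n_def top] .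
  moreover have "u = ones (n+4)"
    if "ascent (n+4) (fk (Suc k)) u vs" "local_max (n+4) (fk (Suc k)) u" for u vs
    using ascent_local_max_lift[OF n_def unique that] by blast
  moreover have "4 * Suc k + 2 = n + 4" using n_def by simp
  ultimately show ?case by (metis (no_types))
qed

theorem mainTheorem4:
  shows "p 2 = 2 \<and> (\<forall>n. n mod 4 = 2 \<longrightarrow> p (n + 4) \<ge> 2 * p n)"
proof (intro conjI allI impI)
  show "p 2 = 2" by (rule p_2)
  fix n :: nat
  assume "n mod 4 = 2"
  define k where "k = n div 4"
  have n: "n = 4*k+2" using \<open>n mod 4 = 2\<close> unfolding k_def by presburger
  then have f: "f n = fk k" "f (n+4) = fk (Suc k)" by (simp_all add: f_def)
  obtain u vs where vs: "ascent (n+4) (fk (Suc k)) u vs" "local_max (n+4) (fk (Suc k)) u"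
    and p_vs: "p (n+4) = length vs - 1"
    using p_attained[of "n+4"] unfolding f by blast
  have top: "local_max n (fk k) (ones n)"
    and unique: "\<forall>u ws. ascent n (fk k) u ws \<longrightarrow> local_max n (fk k) u \<longrightarrow> u = ones n"
    using fk_reachable_local_max[of k] unfolding n[symmetric] by auto
  obtain ws1 ws2 where "ascent n (fk k) (ones n) ws1" "ascent n (fk k) (ones n) ws2"
    and len: "length ws1 + length ws2 \<le> length vs"
    using ascent_local_max_lift[OF n unique vs] by blast
  then have "p n \<le> length ws1 - 1" "p n \<le> length ws2 - 1"
    using p_le_ascent_length[of n] top unfolding f by auto
  then show "p (n + 4) \<ge> 2 * p n" using len p_vs by linarith
qed

end
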